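(* In the game described in the context, suppose the SSP Game Model Assumption holds, and let $\mu\in\Pi_1^{SD}$, $\nu\in\Pi_2^{SD}$. Then: (i) if there exists $x\in\mathbb{R}^n$ with $x\ge T_\mu x$, then $\mu$ is essentially proper; (ii) if there exists $x\in\mathbb{R}^n$ with $x\le\tilde T_\nu x$, then $\nu$ is essentially proper. Moreover, the policies $\bar\mu$ and $\bar\nu$ from parts (i) and (ii) of the SSP Game Model Assumption are essentially proper (so each player has at least one essentially proper stationary deterministic policy).
   Context: Game model. $S=\{1,\dots,n\}$, $S_o=S\cup\{0\}$, $0$ an absorbing cost-free termination state. At $i\in S$ player I picks $\bar u\in\bar U(i)$, player II picks $\bar v\in\bar V(i)$ ($\bar U(i),\bar V(i)$ compact subsets of complete separable metric spaces); expected cost $c_i(\bar u,\bar v)\in\mathbb{R}$ to player I, transition to $j\in S_o$ w.p. $p_{ij}(\bar u,\bar v)$. Standing assumption: $p_{ij}$ continuous on $\bar U(i)\times\bar V(i)$, and $c_i$ lower semicontinuous in $\bar u$ for fixed $\bar v$, upper semicontinuous in $\bar v$ for fixed $\bar u$. $x_i(\pi_1,\pi_2)=\liminf_{t\to\infty}E_{\pi_1\pi_2}[\sum_{k=0}^tc_{i_k}(\bar u_k,\bar v_k)\mid i_0=i]$. $\Pi_1^{SD}=\{\mu:\mu(i)\in\bar U(i)\}$, $\Pi_2^{SD}=\{\nu:\nu(i)\in\bar V(i)\}$; $T_{\mu\nu}x=c(\mu,\nu)+P(\mu,\nu)x$ with $c(\mu,\nu)_i=c_i(\mu(i),\nu(i))$,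 $P(\mu,\nu)_{ij}=p_{ij}(\mu(i),\nu(i))$, $i,j\in S$; $T_\mu x=\sup_{\nu\in\Pi_2^{SD}}T_{\mu\nu}x$, $\tilde T_\nu x=\inf_{\mu\in\Pi_1^{SD}}T_{\mu\nu}x$ (componentwise). Prolonging pair: for some initial state the termination state is with positive probability never reached; otherwise non-prolonging. SSP Game Model Assumption: (i) there is $\bar\mu\in\Pi_1^{SD}$ with $x_i(\bar\mu,\nu)<+\infty$ for all $\nu\in\Pi_2^{SD}$ and all $i$; (ii) there is $\bar\nu\in\Pi_2^{SD}$ with $x_i(\mu,\bar\nu)>-\infty$ for all $\mu\in\Pi_1^{SD}$ and all $i$; (iii) every prolonging pair $(\mu,\nu)\in\Pi_1^{SD}\times\Pi_2^{SD}$ has $x_i(\mu,\nu)\in\{+\infty,-\infty\}$ for some $i$. Essentially proper: $\mu$ is essentially proper if some $\nu$ makes $(\mu,\nu)$ non-prolonging and every $\nu$ with $(\mu,\nu)$ prolonging has $x_i(\mu,\nu)=-\infty$ for some $i$; $\nu$ is essentially proper if some $\mu$ makes $(\mu,\nu)$ non-prolonging and every $\mu$ with $(\mu,\nu)$ prolonging has $x_i(\mu,\nu)=+\infty$ for some $i$. *)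

theory Defs
  imports "HOL-Analysis.Analysis" "HOL-Library.Extended_Real"
begin

(* States: S = UNIV :: 's set (finite, |S| = n). The termination state 0 is None :: 's option,
   so S_o = UNIV :: 's option set and state j in S is Some j. *)

definition lsc_on :: "'a::topological_space set \<Rightarrow> ('a \<Rightarrow> real) \<Rightarrow> bool" where
  "lsc_on A f \<longleftrightarrow> (\<forall>x\<in>A. \<forall>e>0. \<forall>\<^sub>F y in at x within A. f x - e < f y)"

definition usc_on :: "'a::topological_space set \<Rightarrow> ('a \<Rightarrow> real) \<Rightarrow> bool" where
  "usc_on A f \<longleftrightarrow> (\<forall>x\<in>A. \<forall>e>0. \<forall>\<^sub>F y in at x within A. f y < f x + e)"

definition game_model ::
  "('s::finite \<Rightarrow> 'u::polish_space set) \<Rightarrow> ('s \<Rightarrow> 'v::polish_space set)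
   \<Rightarrow> ('s \<Rightarrow> 'u \<Rightarrow> 'v \<Rightarrow> real) \<Rightarrow> ('s \<Rightarrow> 's option \<Rightarrow> 'u \<Rightarrow> 'v \<Rightarrow> real) \<Rightarrow> bool" where
  "game_model U V c p \<longleftrightarrow>
     (\<forall>i. compact (U i) \<and> compact (V i)) \<and>
     (\<forall>i j u v. u \<in> U i \<longrightarrow> v \<in> V i \<longrightarrow> 0 \<le> p i j u v) \<and>
     (\<forall>i u v. u \<in> U i \<longrightarrow> v \<in> V i \<longrightarrow> (\<Sum>j\<in>UNIV. p i j u v) = 1) \<and>
     (\<forall>i j. continuous_on (U i \<times> V i) (\<lambda>(u, v). p i j u v)) \<and>
     (\<forall>i. \<forall>v\<in>V i. lsc_on (U i) (\<lambda>u. c i u v)) \<and>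
     (\<forall>i. \<forall>u\<in>U i. usc_on (V i) (\<lambda>v. c i u v))"

definition Pi1 :: "('s \<Rightarrow> 'u set) \<Rightarrow> ('s \<Rightarrow> 'u) set" where
  "Pi1 U = {\<mu>. \<forall>i. \<mu> i \<in> U i}"

definition Pi2 :: "('s \<Rightarrow> 'v set) \<Rightarrow> ('s \<Rightarrow> 'v) set" where
  "Pi2 V = {\<nu>. \<forall>i. \<nu> i \<in> V i}"

(* k-step transition probabilities of the stationary pair (mu,nu) among the states of S
   (the termination state 0 is absorbing and cost-free) *)
fun Pk :: "('s::finite \<Rightarrow> 's option \<Rightarrow> 'u \<Rightarrow> 'v \<Rightarrow> real) \<Rightarrow> ('s \<Rightarrow> 'u) \<Rightarrow> ('s \<Rightarrow> 'v)
           \<Rightarrow> nat \<Rightarrow> 's \<Rightarrow> 's \<Rightarrow> real" where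
  "Pk p \<mu> \<nu> 0 i j = (if i = j then 1 else 0)"
| "Pk p \<mu> \<nu> (Suc k) i j = (\<Sum>l\<in>UNIV. Pk p \<mu> \<nu> k i l * p l (Some j) (\<mu> l) (\<nu> l))"

definition cost ::
  "('s::finite \<Rightarrow> 'u \<Rightarrow> 'v \<Rightarrow> real) \<Rightarrow> ('s \<Rightarrow> 's option \<Rightarrow> 'u \<Rightarrow> 'v \<Rightarrow> real)
   \<Rightarrow> ('s \<Rightarrow> 'u) \<Rightarrow> ('s \<Rightarrow> 'v) \<Rightarrow> 's \<Rightarrow> ereal" where
  "cost c p \<mu> \<nu> i =
     liminf (\<lambda>t. ereal (\<Sum>k\<le>t. \<Sum>j\<in>UNIV. Pk p \<mu> \<nu> k i j * c j (\<mu> j) (\<nu> j)))"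

(* Probability, starting from i, that the termination state is never reached:
   P(i_k \<in> S for all k) = lim_k P(i_k \<in> S) = inf_k P(i_k \<in> S) (decreasing events) *)
definition never_term_prob ::
  "('s::finite \<Rightarrow> 's option \<Rightarrow> 'u \<Rightarrow> 'v \<Rightarrow> real) \<Rightarrow> ('s \<Rightarrow> 'u) \<Rightarrow> ('s \<Rightarrow> 'v) \<Rightarrow> 's \<Rightarrow> real" where
  "never_term_prob p \<mu> \<nu> i = (INF k. \<Sum>j\<in>UNIV. Pk p \<mu> \<nu> k i j)"

definition prolonging ::
  "('s::finite \<Rightarrow> 's option \<Rightarrow> 'u \<Rightarrow> 'v \<Rightarrow> real) \<Rightarrow> ('s \<Rightarrow> 'u) \<Rightarrow> ('s \<Rightarrow> 'v) \<Rightarrow> bool" where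
  "prolonging p \<mu> \<nu> \<longleftrightarrow> (\<exists>i. never_term_prob p \<mu> \<nu> i > 0)"

definition Tmn ::
  "('s::finite \<Rightarrow> 'u \<Rightarrow> 'v \<Rightarrow> real) \<Rightarrow> ('s \<Rightarrow> 's option \<Rightarrow> 'u \<Rightarrow> 'v \<Rightarrow> real)
   \<Rightarrow> ('s \<Rightarrow> 'u) \<Rightarrow> ('s \<Rightarrow> 'v) \<Rightarrow> ('s \<Rightarrow> real) \<Rightarrow> 's \<Rightarrow> real" where
  "Tmn c p \<mu> \<nu> x i = c i (\<mu> i) (\<nu> i) + (\<Sum>j\<in>UNIV. p i (Some j) (\<mu> i) (\<nu> i) * x j)"

definition Tmu where
  "Tmu V c p \<mu> x i = (SUP \<nu>\<in>Pi2 V. ereal (Tmn c p \<mu> \<nu> x i))"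

definition Tnu where
  "Tnu U c p \<nu> x i = (INF \<mu>\<in>Pi1 U. ereal (Tmn c p \<mu> \<nu> x i))"

definition ssp_assumption where
  "ssp_assumption U V c p \<mu>b \<nu>b \<longleftrightarrow>
     \<mu>b \<in> Pi1 U \<and> (\<forall>\<nu>\<in>Pi2 V. \<forall>i. cost c p \<mu>b \<nu> i < \<infinity>) \<and>
     \<nu>b \<in> Pi2 V \<and> (\<forall>\<mu>\<in>Pi1 U. \<forall>i. cost c p \<mu> \<nu>b i > -\<infinity>) \<and>
     (\<forall>\<mu>\<in>Pi1 U. \<forall>\<nu>\<in>Pi2 V. prolonging p \<mu> \<nu> \<longrightarrow>
        (\<exists>i. cost c p \<mu> \<nu> i = \<infinity> \<or> cost c p \<mu> \<nu> i = -\<infinity>))"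

definition ess_proper1 where
  "ess_proper1 U V c p \<mu> \<longleftrightarrow>
     (\<exists>\<nu>\<in>Pi2 V. \<not> prolonging p \<mu> \<nu>) \<and>
     (\<forall>\<nu>\<in>Pi2 V. prolonging p \<mu> \<nu> \<longrightarrow> (\<exists>i. cost c p \<mu> \<nu> i = -\<infinity>))"

definition ess_proper2 where
  "ess_proper2 U V c p \<nu> \<longleftrightarrow>
     (\<exists>\<mu>\<in>Pi1 U. \<not> prolonging p \<mu> \<nu>) \<and>
     (\<forall>\<mu>\<in>Pi1 U. prolonging p \<mu> \<nu> \<longrightarrow> (\<exists>i. cost c p \<mu> \<nu> i = \<infinity>))"

end

theory Submission
  imports Defs
begin

text \<open>Iterating \<open>T\<^sub>\<mu>\<^sub>\<nu>\<close> telescopes: the cost accumulated up to stage \<open>t\<close> plus the expected value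
  of \<open>x\<close> at stage \<open>t + 1\<close> equals \<open>x\<^sub>i\<close> plus the accumulated defects \<open>T\<^sub>\<mu>\<^sub>\<nu> x - x\<close>. If \<open>x \<ge> T\<^sub>\<mu> x\<close>
  the defects are nonpositive for every \<open>\<nu>\<close>, and since the transition matrices are substochastic
  the terminal term is bounded by \<open>\<Sum>\<^sub>j |x\<^sub>j|\<close>; so all partial costs are bounded above and every
  cost \<open>x\<^sub>i(\<mu>, \<nu>)\<close> is \<open>< +\<infinity>\<close>. Part (iii) of the SSP assumption then forces every prolonging
  pair \<open>(\<mu>, \<nu>)\<close> to have a cost \<open>-\<infinity>\<close>, while \<open>(\<mu>, \<nu>b)\<close>, whose costs are also \<open>> -\<infinity>\<close> by part (ii), cannot be
  prolonging. Part (ii) is symmetric, and for \<open>\<mu>b\<close> and \<open>\<nu>b\<close> the required finiteness is part of the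
  assumption itself.\<close>

definition substochastic ::
  "('s::finite \<Rightarrow> 's option \<Rightarrow> 'u \<Rightarrow> 'v \<Rightarrow> real) \<Rightarrow> ('s \<Rightarrow> 'u) \<Rightarrow> ('s \<Rightarrow> 'v) \<Rightarrow> bool" where
  "substochastic p \<mu> \<nu> \<longleftrightarrow>
     (\<forall>l j. 0 \<le> p l (Some j) (\<mu> l) (\<nu> l)) \<and> (\<forall>l. (\<Sum>j\<in>UNIV. p l (Some j) (\<mu> l) (\<nu> l)) \<le> 1)"

definition partial_cost ::
  "('s::finite \<Rightarrow> 'u \<Rightarrow> 'v \<Rightarrow> real) \<Rightarrow> ('s \<Rightarrow> 's option \<Rightarrow> 'u \<Rightarrow> 'v \<Rightarrow> real)
   \<Rightarrow> ('s \<Rightarrow> 'u) \<Rightarrow> ('s \<Rightarrow> 'v) \<Rightarrow> nat \<Rightarrow> 's \<Rightarrow> real" where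
  "partial_cost c p \<mu> \<nu> t i = (\<Sum>k\<le>t. \<Sum>j\<in>UNIV. Pk p \<mu> \<nu> k i j * c j (\<mu> j) (\<nu> j))"

lemma cost_eq_liminf_partial_cost:
  "cost c p \<mu> \<nu> i = liminf (\<lambda>t. ereal (partial_cost c p \<mu> \<nu> t i))"
  by (simp add: cost_def partial_cost_def)

lemma sum_UNIV_option:
  fixes f :: "'a::finite option \<Rightarrow> 'b::comm_monoid_add"
  shows "(\<Sum>j\<in>UNIV. f j) = f None + (\<Sum>j\<in>UNIV. f (Some j))"
proof -
  have UNIV_eq: "(UNIV :: 'a option set) = insert None (range Some)"
    by (auto intro: option.exhaust)
  have "(\<Sum>j\<in>UNIV. f j) = f None + sum f (range Some)"
    unfolding UNIV_eq by (subst sum.insert) auto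
  also have "sum f (range Some) = (\<Sum>j\<in>UNIV. f (Some j))"
    by (simp add: sum.reindex)
  finally show ?thesis .
qed

lemma game_model_substochastic:
  assumes "game_model U V c p" and "\<mu> \<in> Pi1 U" and "\<nu> \<in> Pi2 V"
  shows "substochastic p \<mu> \<nu>"
proof -
  have "\<mu> l \<in> U l" "\<nu> l \<in> V l" for l
    using assms(2,3) by (auto simp: Pi1_def Pi2_def)
  then have "0 \<le> p l j (\<mu> l) (\<nu> l)" "(\<Sum>j\<in>UNIV. p l j (\<mu> l) (\<nu> l)) = 1" for l j
    using assms(1) by (auto simp: game_model_def)
  moreover have "(\<Sum>j\<in>UNIV. p l j (\<mu> l) (\<nu> l))
      = p l None (\<mu> l) (\<nu> l) + (\<Sum>j\<in>UNIV. p l (Some j) (\<mu> l) (\<nu> l))" for l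
    by (rule sum_UNIV_option)
  ultimately show ?thesis
    unfolding substochastic_def by (smt (verit))
qed

lemma Pk_nonneg:
  assumes "substochastic p \<mu> \<nu>"
  shows "0 \<le> Pk p \<mu> \<nu> k i j"
  using assms by (induction k arbitrary: j) (auto simp: substochastic_def intro!: sum_nonneg)

lemma sum_Pk_0_mult: "(\<Sum>j\<in>UNIV. Pk p \<mu> \<nu> 0 i j * f j) = f i"
proof -
  have "(\<Sum>j\<in>UNIV. Pk p \<mu> \<nu> 0 i j * f j) = (\<Sum>j\<in>UNIV. if i = j then f j else 0)"
    by (rule sum.cong) auto
  then show ?thesis
    by simp
qed

lemma sum_Pk_Suc_mult:
  "(\<Sum>l\<in>UNIV. Pk p \<mu> \<nu> (Suc k) i l * x l)
   = (\<Sum>j\<in>UNIV. Pk p \<mu> \<nu> k i j * (\<Sum>l\<in>UNIV. p j (Some l) (\<mu> j) (\<nu> j) * x l))"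
proof -
  have "(\<Sum>l\<in>UNIV. Pk p \<mu> \<nu> (Suc k) i l * x l)
      = (\<Sum>l\<in>UNIV. \<Sum>j\<in>UNIV. Pk p \<mu> \<nu> k i j * p j (Some l) (\<mu> j) (\<nu> j) * x l)"
    by (simp only: Pk.simps sum_distrib_right)
  also have "\<dots> = (\<Sum>j\<in>UNIV. \<Sum>l\<in>UNIV. Pk p \<mu> \<nu> k i j * p j (Some l) (\<mu> j) (\<nu> j) * x l)"
    by (rule sum.swap)
  finally show ?thesis
    by (simp add: sum_distrib_left mult.assoc)
qed

lemma sum_Pk_le_1:
  assumes "substochastic p \<mu> \<nu>"
  shows "(\<Sum>j\<in>UNIV. Pk p \<mu> \<nu> k i j) \<le> 1"
proof (induction k)
  case 0
  show ?case by simp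
next
  case (Suc k)
  have "(\<Sum>j\<in>UNIV. Pk p \<mu> \<nu> (Suc k) i j)
      = (\<Sum>l\<in>UNIV. Pk p \<mu> \<nu> k i l * (\<Sum>j\<in>UNIV. p l (Some j) (\<mu> l) (\<nu> l)))"
    using sum_Pk_Suc_mult[where x = "\<lambda>_. 1"] by simp
  also have "\<dots> \<le> (\<Sum>l\<in>UNIV. Pk p \<mu> \<nu> k i l)"
    using assms by (intro sum_mono) (simp add: Pk_nonneg mult_left_le substochastic_def)
  also have "\<dots> \<le> 1"
    by (rule Suc)
  finally show ?case .
qed

lemma abs_sum_Pk_mult_le:
  assumes "substochastic p \<mu> \<nu>"
  shows "\<bar>\<Sum>j\<in>UNIV. Pk p \<mu> \<nu> k i j * x j\<bar> \<le> (\<Sum>j\<in>UNIV. \<bar>x j\<bar>)"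
proof -
  have "Pk p \<mu> \<nu> k i j \<le> 1" for j
    using member_le_sum[of j UNIV "Pk p \<mu> \<nu> k i"] sum_Pk_le_1[OF assms, of k i]
      Pk_nonneg[OF assms] by force
  then have "\<bar>Pk p \<mu> \<nu> k i j * x j\<bar> \<le> \<bar>x j\<bar>" for j
    using Pk_nonneg[OF assms] by (simp add: abs_mult mult_left_le_one_le)
  then have "(\<Sum>j\<in>UNIV. \<bar>Pk p \<mu> \<nu> k i j * x j\<bar>) \<le> (\<Sum>j\<in>UNIV. \<bar>x j\<bar>)"
    by (rule sum_mono)
  then show ?thesis
    by (rule order_trans[OF sum_abs])
qed

lemma sum_Pk_mult_Tmn:
  "(\<Sum>j\<in>UNIV. Pk p \<mu> \<nu> k i j * Tmn c p \<mu> \<nu> x j)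
   = (\<Sum>j\<in>UNIV. Pk p \<mu> \<nu> k i j * c j (\<mu> j) (\<nu> j)) + (\<Sum>j\<in>UNIV. Pk p \<mu> \<nu> (Suc k) i j * x j)"
  unfolding sum_Pk_Suc_mult by (simp add: Tmn_def distrib_left sum.distrib del: Pk.simps)

lemma partial_cost_telescope:
  "partial_cost c p \<mu> \<nu> t i + (\<Sum>j\<in>UNIV. Pk p \<mu> \<nu> (Suc t) i j * x j)
   = x i + (\<Sum>k\<le>t. \<Sum>j\<in>UNIV. Pk p \<mu> \<nu> k i j * (Tmn c p \<mu> \<nu> x j - x j))"
proof -
  have defect: "(\<Sum>j\<in>UNIV. Pk p \<mu> \<nu> k i j * (Tmn c p \<mu> \<nu> x j - x j))
      = (\<Sum>j\<in>UNIV. Pk p \<mu> \<nu> k i j * c j (\<mu> j) (\<nu> j))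
        + (\<Sum>j\<in>UNIV. Pk p \<mu> \<nu> (Suc k) i j * x j) - (\<Sum>j\<in>UNIV. Pk p \<mu> \<nu> k i j * x j)" for k
    by (simp only: right_diff_distrib sum_subtractf sum_Pk_mult_Tmn)
  show ?thesis
  proof (induction t)
    case 0
    show ?case
      using defect[of 0] sum_Pk_0_mult[of p \<mu> \<nu> i x] by (simp add: partial_cost_def del: Pk.simps)
  next
    case (Suc t)
    then show ?case
      using defect[of "Suc t"] by (simp add: partial_cost_def del: Pk.simps)
  qed
qed

lemma partial_cost_le_if_Tmn_le:
  assumes "substochastic p \<mu> \<nu>" and "\<And>j. Tmn c p \<mu> \<nu> x j \<le> x j"
  shows "partial_cost c p \<mu> \<nu> t i \<le> x i + (\<Sum>j\<in>UNIV. \<bar>x j\<bar>)"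
proof -
  have "(\<Sum>k\<le>t. \<Sum>j\<in>UNIV. Pk p \<mu> \<nu> k i j * (Tmn c p \<mu> \<nu> x j - x j)) \<le> 0"
    using assms by (intro sum_nonpos mult_nonneg_nonpos) (simp_all add: Pk_nonneg)
  then show ?thesis
    using partial_cost_telescope[of c p \<mu> \<nu> t i x] abs_sum_Pk_mult_le[OF assms(1), of "Suc t" i x]
    by linarith
qed

lemma partial_cost_ge_if_le_Tmn:
  assumes "substochastic p \<mu> \<nu>" and "\<And>j. x j \<le> Tmn c p \<mu> \<nu> x j"
  shows "x i - (\<Sum>j\<in>UNIV. \<bar>x j\<bar>) \<le> partial_cost c p \<mu> \<nu> t i"
proof -
  have "0 \<le> (\<Sum>k\<le>t. \<Sum>j\<in>UNIV. Pk p \<mu> \<nu> k i j * (Tmn c p \<mu> \<nu> x j - x j))"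
    using assms by (intro sum_nonneg mult_nonneg_nonneg) (simp_all add: Pk_nonneg)
  then show ?thesis
    using partial_cost_telescope[of c p \<mu> \<nu> t i x] abs_sum_Pk_mult_le[OF assms(1), of "Suc t" i x]
    by linarith
qed

lemma cost_less_infinity_if_Tmn_le:
  assumes "substochastic p \<mu> \<nu>" and "\<And>j. Tmn c p \<mu> \<nu> x j \<le> x j"
  shows "cost c p \<mu> \<nu> i < \<infinity>"
proof -
  have "cost c p \<mu> \<nu> i \<le> limsup (\<lambda>t. ereal (partial_cost c p \<mu> \<nu> t i))"
    unfolding cost_eq_liminf_partial_cost by (rule Liminf_le_Limsup) simp
  also have "\<dots> \<le> ereal (x i + (\<Sum>j\<in>UNIV. \<bar>x j\<bar>))"
    using partial_cost_le_if_Tmn_le[OF assms] by (intro Limsup_bounded) auto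
  finally show ?thesis
    by (cases "cost c p \<mu> \<nu> i") auto
qed

lemma cost_greater_minus_infinity_if_le_Tmn:
  assumes "substochastic p \<mu> \<nu>" and "\<And>j. x j \<le> Tmn c p \<mu> \<nu> x j"
  shows "cost c p \<mu> \<nu> i > -\<infinity>"
proof -
  have "ereal (x i - (\<Sum>j\<in>UNIV. \<bar>x j\<bar>)) \<le> cost c p \<mu> \<nu> i"
    unfolding cost_eq_liminf_partial_cost
    using partial_cost_ge_if_le_Tmn[OF assms] by (intro Liminf_bounded) auto
  then show ?thesis
    by (cases "cost c p \<mu> \<nu> i") auto
qed

lemma ess_proper1_if_costs_less_infinity:
  assumes ssp: "ssp_assumption U V c p \<mu>b \<nu>b" and "\<mu> \<in> Pi1 U"
    and fin: "\<And>\<nu> i. \<nu> \<in> Pi2 V \<Longrightarrow> cost c p \<mu> \<nu> i < \<infinity>"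
  shows "ess_proper1 U V c p \<mu>"
proof -
  have "\<nu>b \<in> Pi2 V" and "\<And>i. cost c p \<mu> \<nu>b i > -\<infinity>"
    using ssp \<open>\<mu> \<in> Pi1 U\<close> by (auto simp: ssp_assumption_def)
  moreover have "\<exists>i. cost c p \<mu> \<nu> i = \<infinity> \<or> cost c p \<mu> \<nu> i = -\<infinity>"
    if "\<nu> \<in> Pi2 V" "prolonging p \<mu> \<nu>" for \<nu>
    using ssp \<open>\<mu> \<in> Pi1 U\<close> that by (auto simp: ssp_assumption_def)
  ultimately show ?thesis
    unfolding ess_proper1_def using fin by (metis less_irrefl)
qed

lemma ess_proper2_if_costs_greater_minus_infinity:
  assumes ssp: "ssp_assumption U V c p \<mu>b \<nu>b" and "\<nu> \<in> Pi2 V"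
    and fin: "\<And>\<mu> i. \<mu> \<in> Pi1 U \<Longrightarrow> cost c p \<mu> \<nu> i > -\<infinity>"
  shows "ess_proper2 U V c p \<nu>"
proof -
  have "\<mu>b \<in> Pi1 U" and "\<And>i. cost c p \<mu>b \<nu> i < \<infinity>"
    using ssp \<open>\<nu> \<in> Pi2 V\<close> by (auto simp: ssp_assumption_def)
  moreover have "\<exists>i. cost c p \<mu> \<nu> i = \<infinity> \<or> cost c p \<mu> \<nu> i = -\<infinity>"
    if "\<mu> \<in> Pi1 U" "prolonging p \<mu> \<nu>" for \<mu>
    using ssp \<open>\<nu> \<in> Pi2 V\<close> that by (auto simp: ssp_assumption_def)
  ultimately show ?thesis
    unfolding ess_proper2_def using fin by (metis less_irrefl)
qed

theorem lemma2p3: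
  fixes U :: "'s::finite \<Rightarrow> 'u::polish_space set"
    and V :: "'s \<Rightarrow> 'v::polish_space set"
    and c :: "'s \<Rightarrow> 'u \<Rightarrow> 'v \<Rightarrow> real"
    and p :: "'s \<Rightarrow> 's option \<Rightarrow> 'u \<Rightarrow> 'v \<Rightarrow> real"
    and \<mu>b \<mu> :: "'s \<Rightarrow> 'u" and \<nu>b \<nu> :: "'s \<Rightarrow> 'v"
  assumes "game_model U V c p"
    and "ssp_assumption U V c p \<mu>b \<nu>b"
    and "\<mu> \<in> Pi1 U" and "\<nu> \<in> Pi2 V"
  shows "((\<exists>x::'s \<Rightarrow> real. \<forall>i. Tmu V c p \<mu> x i \<le> ereal (x i)) \<longrightarrow> ess_proper1 U V c p \<mu>)
       \<and> ((\<exists>x::'s \<Rightarrow> real. \<forall>i. ereal (x i) \<le> Tnu U c p \<nu> x i) \<longrightarrow> ess_proper2 U V c p \<nu>)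
       \<and> ess_proper1 U V c p \<mu>b \<and> ess_proper2 U V c p \<nu>b"
proof (intro conjI impI)
  assume "\<exists>x. \<forall>i. Tmu V c p \<mu> x i \<le> ereal (x i)"
  then obtain x where "\<And>\<nu>' i. \<nu>' \<in> Pi2 V \<Longrightarrow> Tmn c p \<mu> \<nu>' x i \<le> x i"
    by (auto simp: Tmu_def SUP_le_iff)
  then show "ess_proper1 U V c p \<mu>"
    using assms by (blast intro: ess_proper1_if_costs_less_infinity
        cost_less_infinity_if_Tmn_le game_model_substochastic)
next
  assume "\<exists>x. \<forall>i. ereal (x i) \<le> Tnu U c p \<nu> x i"
  then obtain x where "\<And>\<mu>' i. \<mu>' \<in> Pi1 U \<Longrightarrow> x i \<le> Tmn c p \<mu>' \<nu> x i"
    by (auto simp: Tnu_def le_INF_iff)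
  then show "ess_proper2 U V c p \<nu>"
    using assms by (blast intro: ess_proper2_if_costs_greater_minus_infinity
        cost_greater_minus_infinity_if_le_Tmn game_model_substochastic)
next
  show "ess_proper1 U V c p \<mu>b" "ess_proper2 U V c p \<nu>b"
    using assms(2) by (auto simp: ssp_assumption_def
        intro: ess_proper1_if_costs_less_infinity ess_proper2_if_costs_greater_minus_infinity)
qed

end
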